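(* Let $\Omega\subseteq\mathbb{R}^n$ be open, $u:\Omega\to\mathbb{R}^N$ a map continuous at $x\in\Omega$, and $\xi\in\mathbb{S}^{N-1}$. (a) $J^{1,\xi}u(x)$ is a convex subset of $\mathbb{R}^{N\times n}$ and $J^{2,\xi}u(x)$ is a convex subset of $\mathbb{R}^{N\times n}\times(\mathbb{R}^N\otimes\mathbb{R}^{n\times n}_s)$. (b) $J^{1,\xi}u(x)$ is closed in $\mathbb{R}^{N\times n}$, and for every $P\in\mathbb{R}^{N\times n}$ the set $\{\mathbf{X}\in\mathbb{R}^N\otimes\mathbb{R}^{n\times n}_s:(P,\mathbf{X})\in J^{2,\xi}u(x)\}$ is closed. (c) If $J^{2,\xi}u(x)\ne\emptyset$ then it has infinite diameter; moreover, if $(P,\mathbf{X})\in J^{2,\xi}u(x)$ then $(P,\mathbf{X}+\xi\otimes A)\in J^{2,\xi}u(x)$ for every positive semidefinite $A\in\mathbb{R}^{n\times n}_s$.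
   Context: $\mathbb{R}^N\otimes\mathbb{R}^{n\times n}_s$: arrays $\mathbf{X}=(\mathbf{X}_{\alpha ij})$ symmetric in $i,j$; $\mathbf{X}:z\otimes z$ has components $\sum_{ij}\mathbf{X}_{\alpha ij}z_iz_j$; $\xi\otimes A:=(\xi_\alpha A_{ij})$. For $a,b\in\mathbb{R}^N$, $a\vee b:=\frac12(a\otimes b+b\otimes a)$; matrix inequalities in the sense of quadratic forms. Contact jets: $J^{1,\xi}u(x)$ is the set of $P$ for which there is a continuous $T:\mathbb{R}^n\setminus\{0\}\to\mathbb{R}^{N\times N}_s$ with $|T(y)|\to0$ as $y\to0$ and $\xi\vee[u(z)-u(x)-P(z-x)]\le|z-x|T(z-x)$ for $z\ne x$ near $x$; $J^{2,\xi}u(x)$ is the set of $(P,\mathbf{X})$ with such a $T$ and $\xi\vee[u(z)-u(x)-P(z-x)-\frac12\mathbf{X}:(z-x)\otimes(z-x)]\le|z-x|^2T(z-x)$ for $z\ne x$ near $x$. *)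

theory Defs
  imports "HOL-Analysis.Analysis"
begin

text \<open>Vectors in R^n: real^'n; maps R^n -> R^N: real^'n => real^'m;
  P in R^{N x n}: real^'n^'m (so P *v y in R^N);
  X in R^N (x) R^{n x n}_s: real^'n^'n^'m with X$a$i$j = X$a$j$i.\<close>

definition sym_tensor :: "real^'n^'n^'m \<Rightarrow> bool" where
  "sym_tensor X \<longleftrightarrow> (\<forall>a i j. X$a$i$j = X$a$j$i)"

definition tensor_quad :: "real^'n^'n^'m \<Rightarrow> real^'n \<Rightarrow> real^'m" where
  "tensor_quad X z = (\<chi> a. \<Sum>i\<in>UNIV. \<Sum>j\<in>UNIV. X$a$i$j * z$i * z$j)"

definition vec_tensor :: "real^'m \<Rightarrow> real^'n^'n \<Rightarrow> real^'n^'n^'m" where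
  "vec_tensor \<xi> A = (\<chi> a i j. \<xi>$a * A$i$j)"

definition vee :: "real^'m \<Rightarrow> real^'m \<Rightarrow> real^'m^'m" where
  "vee a b = (\<chi> i j. (a$i * b$j + b$i * a$j) / 2)"

definition mat_le :: "real^'m^'m \<Rightarrow> real^'m^'m \<Rightarrow> bool" where
  "mat_le A B \<longleftrightarrow> (\<forall>w. w \<bullet> (A *v w) \<le> w \<bullet> (B *v w))"

definition psd :: "real^'n^'n \<Rightarrow> bool" where
  "psd A \<longleftrightarrow> transpose A = A \<and> (\<forall>z. 0 \<le> z \<bullet> (A *v z))"

definition admissible_T :: "(real^'n \<Rightarrow> real^'m^'m) \<Rightarrow> bool" where
  "admissible_T T \<longleftrightarrow> continuous_on (UNIV - {0}) T
     \<and> (\<forall>y. y \<noteq> 0 \<longrightarrow> transpose (T y) = T y)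
     \<and> (T \<longlongrightarrow> 0) (at 0)"

definition J1 :: "(real^'n) set \<Rightarrow> (real^'n \<Rightarrow> real^'m) \<Rightarrow> real^'m \<Rightarrow> real^'n
                   \<Rightarrow> (real^'n^'m) set" where
  "J1 \<Omega> u \<xi> x = {P. \<exists>T. admissible_T T \<and>
     (\<exists>\<delta>>0. \<forall>z\<in>\<Omega>. z \<noteq> x \<and> dist z x < \<delta> \<longrightarrow>
        mat_le (vee \<xi> (u z - u x - P *v (z - x))) (norm (z - x) *\<^sub>R T (z - x)))}"

definition J2 :: "(real^'n) set \<Rightarrow> (real^'n \<Rightarrow> real^'m) \<Rightarrow> real^'m \<Rightarrow> real^'n
                   \<Rightarrow> ((real^'n^'m) \<times> (real^'n^'n^'m)) set" where
  "J2 \<Omega> u \<xi> x = {(P, X). sym_tensor X \<and> (\<exists>T. admissible_T T \<and>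
     (\<exists>\<delta>>0. \<forall>z\<in>\<Omega>. z \<noteq> x \<and> dist z x < \<delta> \<longrightarrow>
        mat_le (vee \<xi> (u z - u x - P *v (z - x) - (1/2) *\<^sub>R tensor_quad X (z - x)))
               ((norm (z - x))\<^sup>2 *\<^sub>R T (z - x))))}"

end

theory Submission
  imports Defs
begin

text \<open>Both contact jets are described by one condition on the Taylor remainder \<open>R\<close>: the
  quadratic form \<open>w \<mapsto> (\<xi> \<bullet> w) (R z \<bullet> w)\<close> of \<open>\<xi> \<vee> R z\<close> is bounded above by
  \<open>o(|z - x|\<^sup>k) |w|\<^sup>2\<close>.  An admissible error function \<open>T\<close> exists exactly in this case: in one
  direction \<open>T \<rightarrow> 0\<close> bounds the form of \<open>T\<close>, in the other a continuous modulus \<open>h\<close> with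
  \<open>h 0 = 0\<close> majorising the \<open>\<epsilon>\<close>-\<open>\<delta>\<close> statement is glued from ramps, and \<open>T = h \<cdot> I\<close>.
  The condition is stable under sums and nonnegative multiples of remainders (convexity), under
  uniformly \<open>o(|z - x|\<^sup>k)\<close> perturbations (closedness: the remainder is Lipschitz in \<open>P\<close>, resp.
  \<open>X\<close>), and under subtracting nonnegative multiples of \<open>\<xi>\<close>, which is what adding \<open>\<xi> \<otimes> A\<close>
  with \<open>A \<ge> 0\<close> does to the remainder; the ray \<open>X + t \<xi> \<otimes> I\<close> then makes \<open>J2\<close> unbounded.\<close>

lemma vee_mult_vector: "vee a b *v w = ((b \<bullet> w) / 2) *\<^sub>R a + ((a \<bullet> w) / 2) *\<^sub>R b"
  by (simp add: vec_eq_iff vee_def matrix_vector_mult_def inner_vec_def add_divide_distrib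
      sum.distrib sum_distrib_left sum_divide_distrib algebra_simps)

lemma inner_vee_mult_vector: "w \<bullet> (vee a b *v w) = (a \<bullet> w) * (b \<bullet> w)"
  by (simp add: vee_mult_vector inner_commute algebra_simps)

lemma mat_le_vee_scaled_identity_iff:
  "mat_le (vee a b) (c *\<^sub>R mat 1) \<longleftrightarrow> (\<forall>w. (a \<bullet> w) * (b \<bullet> w) \<le> c * (w \<bullet> w))"
  by (simp add: mat_le_def inner_vee_mult_vector scaleR_matrix_vector_assoc[symmetric])

lemma inner_mult_inner_le: "(a \<bullet> w) * (b \<bullet> w) \<le> norm a * norm b * (w \<bullet> w)"
proof -
  have "(a \<bullet> w) * (b \<bullet> w) \<le> \<bar>a \<bullet> w\<bar> * \<bar>b \<bullet> w\<bar>"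
    by (simp add: abs_mult[symmetric])
  also have "\<dots> \<le> (norm a * norm w) * (norm b * norm w)"
    by (intro mult_mono Cauchy_Schwarz_ineq2) auto
  finally show ?thesis
    by (simp add: dot_square_norm power2_eq_square mult_ac)
qed

lemma inner_mult_inner_le_perturb:
  "(a \<bullet> w) * (r \<bullet> w) \<le> (a \<bullet> w) * (r' \<bullet> w) + norm a * norm (r - r') * (w \<bullet> w)"
  using inner_mult_inner_le[of a w "r - r'"] by (simp add: inner_diff_left algebra_simps)

lemma norm_matrix_vector_mult_le:
  fixes A :: "real^'n^'m"
  shows "norm (A *v y) \<le> real CARD('m) * real CARD('n) * norm A * norm y"
proof -
  have "onorm ((*v) A) \<le> real CARD('m) * real CARD('n) * norm A"
    by (rule onorm_le_matrix_component)
      (meson component_le_norm_cart Finite_Cartesian_Product.norm_nth_le order_trans)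
  then show ?thesis
    using onorm[OF matrix_vector_mul_bounded_linear, of A y]
    by (meson mult_right_mono norm_ge_zero order_trans)
qed

lemma inner_matrix_vector_mult_le:
  fixes A :: "real^'m^'m"
  shows "w \<bullet> (A *v w) \<le> real CARD('m) * real CARD('m) * norm A * (w \<bullet> w)"
proof -
  have "w \<bullet> (A *v w) \<le> norm w * norm (A *v w)"
    by (rule norm_cauchy_schwarz)
  also have "\<dots> \<le> norm w * (real CARD('m) * real CARD('m) * norm A * norm w)"
    by (intro mult_left_mono norm_matrix_vector_mult_le) simp
  finally show ?thesis
    by (simp add: dot_square_norm power2_eq_square mult_ac)
qed

lemma vee_form_le_if_mat_le:
  fixes M :: "real^'m^'m"
  assumes "mat_le (vee a b) (s *\<^sub>R M)" "0 \<le> s"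
  shows "(a \<bullet> w) * (b \<bullet> w) \<le> s * (real CARD('m) * real CARD('m) * norm M) * (w \<bullet> w)"
proof -
  have "(a \<bullet> w) * (b \<bullet> w) \<le> w \<bullet> ((s *\<^sub>R M) *v w)"
    using assms(1) by (simp add: mat_le_def inner_vee_mult_vector)
  also have "\<dots> = s * (w \<bullet> (M *v w))"
    by (simp add: scaleR_matrix_vector_assoc[symmetric])
  also have "\<dots> \<le> s * (real CARD('m) * real CARD('m) * norm M * (w \<bullet> w))"
    by (intro mult_left_mono inner_matrix_vector_mult_le assms(2))
  finally show ?thesis
    by (simp add: mult_ac)
qed

lemma admissible_T_scaled_identity:
  fixes h :: "real^'n \<Rightarrow> real"
  assumes "continuous_on UNIV h" "h 0 = 0"
  shows "admissible_T (\<lambda>y. h y *\<^sub>R (mat 1 :: real^'m^'m))"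
proof -
  have "isCont h 0"
    using assms(1) by (simp add: continuous_on_eq_continuous_at)
  then have "(h \<longlongrightarrow> 0) (at 0)"
    using assms(2) by (simp add: isCont_def)
  then have "((\<lambda>y. h y *\<^sub>R (mat 1 :: real^'m^'m)) \<longlongrightarrow> 0 *\<^sub>R mat 1) (at 0)"
    by (intro tendsto_scaleR tendsto_const)
  moreover have "continuous_on (UNIV - {0}) (\<lambda>y. h y *\<^sub>R (mat 1 :: real^'m^'m))"
    by (intro continuous_intros continuous_on_subset[OF assms(1)]) auto
  ultimately show ?thesis
    by (simp add: admissible_T_def transpose_scalar)
qed

lemma tensor_quad_component: "tensor_quad X z $ a = z \<bullet> (X $ a *v z)"
  by (simp add: tensor_quad_def inner_vec_def matrix_vector_mult_def sum_distrib_left algebra_simps)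

lemma tensor_quad_add: "tensor_quad (X + Y) z = tensor_quad X z + tensor_quad Y z"
  by (simp add: vec_eq_iff tensor_quad_def algebra_simps sum.distrib)

lemma tensor_quad_diff: "tensor_quad (X - Y) z = tensor_quad X z - tensor_quad Y z"
  by (simp add: vec_eq_iff tensor_quad_def algebra_simps sum_subtractf)

lemma tensor_quad_scaleR: "tensor_quad (c *\<^sub>R X) z = c *\<^sub>R tensor_quad X z"
  by (simp add: vec_eq_iff tensor_quad_def sum_distrib_left mult_ac)

lemma tensor_quad_vec_tensor: "tensor_quad (vec_tensor \<xi> A) z = (z \<bullet> (A *v z)) *\<^sub>R \<xi>"
  by (simp add: vec_eq_iff tensor_quad_def vec_tensor_def inner_vec_def matrix_vector_mult_def
      sum_distrib_left sum_distrib_right mult_ac)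

lemma norm_tensor_quad_le:
  fixes X :: "real^'n^'n^'m"
  shows "norm (tensor_quad X z) \<le> real CARD('m) * real CARD('n) * real CARD('n) * norm X * (norm z)\<^sup>2"
proof -
  have "\<bar>tensor_quad X z $ a\<bar> \<le> real CARD('n) * real CARD('n) * norm X * (norm z)\<^sup>2" for a
  proof -
    have "\<bar>tensor_quad X z $ a\<bar> \<le> norm z * norm (X $ a *v z)"
      unfolding tensor_quad_component by (rule Cauchy_Schwarz_ineq2)
    also have "\<dots> \<le> norm z * (real CARD('n) * real CARD('n) * norm X * norm z)"
    proof (intro mult_left_mono)
      have "real CARD('n) * real CARD('n) * norm (X $ a) * norm z
          \<le> real CARD('n) * real CARD('n) * norm X * norm z"
        by (intro mult_left_mono mult_right_mono Finite_Cartesian_Product.norm_nth_le) simp_all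
      then show "norm (X $ a *v z) \<le> real CARD('n) * real CARD('n) * norm X * norm z"
        using norm_matrix_vector_mult_le[of "X $ a" z] by linarith
    qed simp
    finally show ?thesis by (simp add: power2_eq_square mult_ac)
  qed
  then have "(\<Sum>a\<in>UNIV. \<bar>tensor_quad X z $ a\<bar>)
      \<le> (\<Sum>a::'m\<in>UNIV. real CARD('n) * real CARD('n) * norm X * (norm z)\<^sup>2)"
    by (rule sum_mono)
  then show ?thesis
    using norm_le_l1_cart[of "tensor_quad X z"] by (simp add: mult_ac)
qed

lemma closed_sym_tensor: "closed {X :: real^'n^'n^'m. sym_tensor X}"
  unfolding sym_tensor_def by (intro closed_Collect_all closed_Collect_eq continuous_intros)

lemma convex_sym_tensor_snd: "convex {PX :: 'a::real_vector \<times> (real^'n^'n^'m). sym_tensor (snd PX)}"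
  by (simp add: convex_alt sym_tensor_def)

lemma halving_radii_below:
  fixes D :: "nat \<Rightarrow> real"
  assumes "\<And>k. 0 < D k"
  obtains d where "\<And>k. 0 < d k" "\<And>k. d (Suc k) < d k" "\<And>k. d k \<le> D k" "\<And>k. d k \<le> (1/2) ^ k"
proof
  define d where "d = rec_nat (min (D 0) 1) (\<lambda>k dk. min (D (Suc k)) (dk / 2))"
  have d0: "d 0 = min (D 0) 1" and dSuc: "d (Suc k) = min (D (Suc k)) (d k / 2)" for k
    by (simp_all add: d_def)
  show pos: "0 < d k" for k
    by (induction k) (simp_all add: d0 dSuc assms)
  show "d (Suc k) < d k" for k
    using pos[of k] by (simp add: dSuc)
  show "d k \<le> D k" for k
    by (cases k) (simp_all add: d0 dSuc)
  show "d k \<le> (1/2) ^ k" for k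
    by (induction k) (auto simp: d0 dSuc intro: min.coboundedI2)
qed

lemma exists_bracketing_index:
  fixes d :: "nat \<Rightarrow> real"
  assumes "d \<longlonglongrightarrow> 0" "0 < t" "t < d 0"
  obtains i where "d (Suc i) \<le> t" "t < d i"
proof -
  have ex: "\<exists>j. d j \<le> t"
    using order_tendstoD(2)[OF assms(1) assms(2)] by (meson eventually_sequentially le_refl less_imp_le)
  define j where "j = (LEAST j. d j \<le> t)"
  have "d j \<le> t"
    unfolding j_def by (rule LeastI_ex[OF ex])
  moreover have "j \<noteq> 0"
    using \<open>d j \<le> t\<close> assms(3) by (metis not_le)
  ultimately obtain i where "j = Suc i" "d (Suc i) \<le> t"
    using not0_implies_Suc by blast
  moreover have "t < d i"
    using not_less_Least[of i "\<lambda>j. d j \<le> t"] \<open>j = Suc i\<close> by (simp add: j_def)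
  ultimately show ?thesis
    using that by blast
qed

lemma continuous_staircase_majorant:
  fixes d :: "nat \<Rightarrow> real"
  assumes pos: "\<And>k. 0 < d k" and decr: "\<And>k. d (Suc k) < d k"
  obtains H where "continuous_on UNIV H" "H 0 = 0" "\<And>k t. d k \<le> t \<Longrightarrow> (1/2::real) ^ k \<le> H t"
proof -
  define g where "g k t = min 1 (max 0 ((t - d (Suc k)) / (d k - d (Suc k))))" for k t
  define H where "H t = (\<Sum>k. (1/2) ^ k * g k t)" for t
  have g_bounds: "0 \<le> g k t" "g k t \<le> 1" for k t
    by (auto simp: g_def)
  have bound: "norm ((1/2::real) ^ k * g k t) \<le> (1/2) ^ k" for k t
    using g_bounds[of k t] by (simp add: abs_mult)
  have summable_geometric_half: "summable (\<lambda>k. (1/2::real) ^ k)"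
    by (rule summable_geometric) simp
  have limit: "uniform_limit UNIV (\<lambda>n t. \<Sum>k<n. (1/2) ^ k * g k t) H sequentially"
    unfolding H_def by (rule Weierstrass_m_test[OF _ summable_geometric_half]) (rule bound)
  have "continuous_on UNIV (g k)" for k
    using decr[of k] unfolding g_def by (intro continuous_intros) auto
  then have "continuous_on UNIV H"
    by (intro uniform_limit_theorem[OF _ limit]) (auto intro!: continuous_intros always_eventually)
  moreover have "H 0 = 0"
  proof -
    have "g k 0 = 0" for k
      using pos[of "Suc k"] decr[of k] by (simp add: g_def divide_neg_pos)
    then show ?thesis
      by (simp add: H_def)
  qed
  moreover have "(1/2) ^ k \<le> H t" if "d k \<le> t" for k t
  proof -
    have "g k t = 1"
      using that decr[of k] by (simp add: g_def)
    moreover have "(\<Sum>i\<in>{k}. (1/2::real) ^ i * g i t) \<le> H t"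
      unfolding H_def using g_bounds
      by (intro sum_le_suminf summable_comparison_test[OF _ summable_geometric_half]) (auto simp: bound)
    ultimately show ?thesis
      by simp
  qed
  ultimately show ?thesis
    by (rule that)
qed

lemma continuous_modulus_exists:
  fixes Q :: "real \<Rightarrow> 'a::real_normed_vector \<Rightarrow> bool"
  assumes mono: "\<And>e e' y. Q e y \<Longrightarrow> e \<le> e' \<Longrightarrow> Q e' y"
    and small: "\<And>e. 0 < e \<Longrightarrow> \<forall>\<^sub>F y in at 0. Q e y"
  obtains h where "continuous_on UNIV h" "h 0 = 0" "\<forall>\<^sub>F y in at 0. Q (h y) y"
proof -
  have "\<forall>k. \<exists>r>0. \<forall>y. y \<noteq> 0 \<and> norm y < r \<longrightarrow> Q ((1/2) ^ Suc k) y"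
    using small by (simp add: eventually_at dist_norm)
  then obtain D where "\<forall>k. 0 < D k \<and> (\<forall>y. y \<noteq> 0 \<and> norm y < D k \<longrightarrow> Q ((1/2) ^ Suc k) y)"
    by (subst (asm) choice_iff) blast
  then have D_pos: "\<And>k. 0 < D k"
    and D: "\<And>k y. y \<noteq> 0 \<Longrightarrow> norm y < D k \<Longrightarrow> Q ((1/2) ^ Suc k) y"
    by simp_all
  obtain d where d: "\<And>k. 0 < d k" "\<And>k. d (Suc k) < d k" "\<And>k. d k \<le> D k" "\<And>k. d k \<le> (1/2) ^ k"
    by (rule halving_radii_below[of D, OF D_pos]) blast
  obtain H :: "real \<Rightarrow> real"
    where H: "continuous_on UNIV H" "H 0 = 0" "\<And>k t. d k \<le> t \<Longrightarrow> (1/2) ^ k \<le> H t"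
    by (rule continuous_staircase_majorant[of d, OF d(1) d(2)]) blast
  have "d \<longlonglongrightarrow> 0"
    by (rule tendsto_sandwich[of "\<lambda>_. 0" _ _ "\<lambda>k. (1/2) ^ k"])
      (simp_all add: d(4) less_imp_le[OF d(1)] LIMSEQ_realpow_zero)
  have "Q (H (norm y)) y" if y: "y \<noteq> 0" "norm y < d 0" for y
  proof -
    obtain i where i: "d (Suc i) \<le> norm y" "norm y < d i"
      by (rule exists_bracketing_index[OF \<open>d \<longlonglongrightarrow> 0\<close>, of "norm y"]) (use y in auto)
    have "Q ((1/2) ^ Suc i) y"
      using D[OF y(1)] i(2) d(3)[of i] by simp
    then show ?thesis
      using H(3)[OF i(1)] by (rule mono)
  qed
  then have "\<forall>\<^sub>F y in at 0. Q (H (norm y)) y"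
    unfolding eventually_at dist_norm using d(1)[of 0] by (intro exI[of _ "d 0"]) simp
  moreover have "continuous_on UNIV (\<lambda>y. H (norm y))"
    by (rule continuous_on_compose2[OF H(1) continuous_on_norm_id]) simp
  ultimately show ?thesis
    using H(2) by (intro that[of "\<lambda>y. H (norm y)"]) simp_all
qed

lemma eventually_at_within_shift:
  fixes x :: "'a::real_normed_vector"
  shows "(\<forall>\<^sub>F z in at x within \<Omega>. P z) \<longleftrightarrow> (\<forall>\<^sub>F y in at 0. x + y \<in> \<Omega> \<longrightarrow> P (x + y))"
proof -
  have "(\<forall>\<^sub>F z in at x within \<Omega>. P z) \<longleftrightarrow> (\<forall>\<^sub>F z in at x. z \<in> \<Omega> \<longrightarrow> P z)"
    by (simp add: eventually_at_filter)
  also have "\<dots> \<longleftrightarrow> (\<forall>\<^sub>F y in at 0. x + y \<in> \<Omega> \<longrightarrow> P (x + y))"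
    by (simp add: eventually_at_to_0[of _ x] add.commute)
  finally show ?thesis .
qed

text \<open>\<open>upper_little_o \<Omega> x \<xi> k R\<close> says \<open>\<xi> \<vee> R z \<le> o(|z - x|\<^sup>k)\<close> as quadratic forms on \<open>\<Omega>\<close> near \<open>x\<close>;
  the quadratic form of \<open>a \<vee> b\<close> is \<open>w \<mapsto> (a \<bullet> w) (b \<bullet> w)\<close>.\<close>

definition upper_little_o :: "(real^'n) set \<Rightarrow> real^'n \<Rightarrow> real^'m \<Rightarrow> nat \<Rightarrow> (real^'n \<Rightarrow> real^'m) \<Rightarrow> bool" where
  "upper_little_o \<Omega> x \<xi> k R \<longleftrightarrow> (\<forall>\<epsilon>>0. \<forall>\<^sub>F z in at x within \<Omega>.
     \<forall>w. (\<xi> \<bullet> w) * (R z \<bullet> w) \<le> \<epsilon> * norm (z - x) ^ k * (w \<bullet> w))"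

lemma upper_little_oD:
  "upper_little_o \<Omega> x \<xi> k R \<Longrightarrow> 0 < \<epsilon> \<Longrightarrow>
    \<forall>\<^sub>F z in at x within \<Omega>. \<forall>w. (\<xi> \<bullet> w) * (R z \<bullet> w) \<le> \<epsilon> * norm (z - x) ^ k * (w \<bullet> w)"
  by (simp add: upper_little_o_def)

lemma upper_little_o_add:
  assumes "upper_little_o \<Omega> x \<xi> k R" "upper_little_o \<Omega> x \<xi> k S"
  shows "upper_little_o \<Omega> x \<xi> k (\<lambda>z. R z + S z)"
  unfolding upper_little_o_def
proof (intro allI impI)
  fix \<epsilon> :: real assume "\<epsilon> > 0"
  then have "\<forall>\<^sub>F z in at x within \<Omega>. \<forall>w. (\<xi> \<bullet> w) * (R z \<bullet> w) \<le> \<epsilon>/2 * norm (z - x) ^ k * (w \<bullet> w)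
      \<and> (\<xi> \<bullet> w) * (S z \<bullet> w) \<le> \<epsilon>/2 * norm (z - x) ^ k * (w \<bullet> w)"
    using upper_little_oD[OF assms(1), of "\<epsilon>/2"] upper_little_oD[OF assms(2), of "\<epsilon>/2"] \<open>\<epsilon> > 0\<close>
    by (simp add: eventually_conj_iff all_conj_distrib del: times_divide_eq_left)
  then show "\<forall>\<^sub>F z in at x within \<Omega>. \<forall>w. (\<xi> \<bullet> w) * ((R z + S z) \<bullet> w) \<le> \<epsilon> * norm (z - x) ^ k * (w \<bullet> w)"
  proof eventually_elim
    case (elim z)
    show ?case
    proof
      fix w
      have "(\<xi> \<bullet> w) * (R z \<bullet> w) \<le> \<epsilon>/2 * norm (z - x) ^ k * (w \<bullet> w)"
        "(\<xi> \<bullet> w) * (S z \<bullet> w) \<le> \<epsilon>/2 * norm (z - x) ^ k * (w \<bullet> w)"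
        using elim by auto
      then show "(\<xi> \<bullet> w) * ((R z + S z) \<bullet> w) \<le> \<epsilon> * norm (z - x) ^ k * (w \<bullet> w)"
        by (simp add: inner_add_left distrib_left)
    qed
  qed
qed

lemma upper_little_o_scaleR:
  assumes "upper_little_o \<Omega> x \<xi> k R" "0 \<le> c"
  shows "upper_little_o \<Omega> x \<xi> k (\<lambda>z. c *\<^sub>R R z)"
  unfolding upper_little_o_def
proof (intro allI impI)
  fix \<epsilon> :: real assume "\<epsilon> > 0"
  then have "\<forall>\<^sub>F z in at x within \<Omega>. \<forall>w. (\<xi> \<bullet> w) * (R z \<bullet> w) \<le> \<epsilon> / (c + 1) * norm (z - x) ^ k * (w \<bullet> w)"
    using \<open>\<epsilon> > 0\<close> assms by (intro upper_little_oD) auto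
  then show "\<forall>\<^sub>F z in at x within \<Omega>. \<forall>w. (\<xi> \<bullet> w) * (c *\<^sub>R R z \<bullet> w) \<le> \<epsilon> * norm (z - x) ^ k * (w \<bullet> w)"
  proof eventually_elim
    case (elim z)
    show ?case
    proof
      fix w
      have "(\<xi> \<bullet> w) * (c *\<^sub>R R z \<bullet> w) = c * ((\<xi> \<bullet> w) * (R z \<bullet> w))" by simp
      also have "\<dots> \<le> c * (\<epsilon> / (c + 1) * norm (z - x) ^ k * (w \<bullet> w))"
        using elim \<open>0 \<le> c\<close> by (intro mult_left_mono) auto
      also have "\<dots> \<le> \<epsilon> * norm (z - x) ^ k * (w \<bullet> w)"
        using \<open>0 \<le> c\<close> \<open>\<epsilon> > 0\<close> by (simp add: field_simps mult_right_mono)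
      finally show "(\<xi> \<bullet> w) * (c *\<^sub>R R z \<bullet> w) \<le> \<epsilon> * norm (z - x) ^ k * (w \<bullet> w)" .
    qed
  qed
qed

lemma upper_little_o_diff_nonneg_scaleR:
  assumes "upper_little_o \<Omega> x \<xi> k R" "\<And>z. 0 \<le> c z"
  shows "upper_little_o \<Omega> x \<xi> k (\<lambda>z. R z - c z *\<^sub>R \<xi>)"
  unfolding upper_little_o_def
proof (intro allI impI)
  fix \<epsilon> :: real assume "\<epsilon> > 0"
  have le: "(\<xi> \<bullet> w) * ((R z - c z *\<^sub>R \<xi>) \<bullet> w) \<le> (\<xi> \<bullet> w) * (R z \<bullet> w)" for z w
    using assms(2)[of z] by (simp add: inner_diff_left algebra_simps)
  show "\<forall>\<^sub>F z in at x within \<Omega>. \<forall>w. (\<xi> \<bullet> w) * ((R z - c z *\<^sub>R \<xi>) \<bullet> w) \<le> \<epsilon> * norm (z - x) ^ k * (w \<bullet> w)"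
    using upper_little_oD[OF assms(1) \<open>\<epsilon> > 0\<close>] by eventually_elim (meson le order_trans)
qed

lemma upper_little_o_approx:
  fixes R :: "real^'n \<Rightarrow> real^'m"
  assumes approx: "\<And>\<epsilon>. \<epsilon> > 0 \<Longrightarrow>
    \<exists>R'. upper_little_o \<Omega> x \<xi> k R' \<and> (\<forall>z. norm (R z - R' z) \<le> \<epsilon> * norm (z - x) ^ k)"
  shows "upper_little_o \<Omega> x \<xi> k R"
  unfolding upper_little_o_def
proof (intro allI impI)
  fix \<epsilon> :: real assume "\<epsilon> > 0"
  define \<eta> where "\<eta> = \<epsilon> / 2 / (norm \<xi> + 1)"
  have "0 < norm \<xi> + 1"
    by (simp add: add_nonneg_pos)
  with \<open>\<epsilon> > 0\<close> have "\<eta> > 0" and "norm \<xi> * \<eta> \<le> \<epsilon> / 2"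
    by (simp_all add: \<eta>_def field_simps)
  obtain R' where R': "upper_little_o \<Omega> x \<xi> k R'"
    and close: "\<And>z. norm (R z - R' z) \<le> \<eta> * norm (z - x) ^ k"
    using approx[OF \<open>\<eta> > 0\<close>] by blast
  have "\<forall>\<^sub>F z in at x within \<Omega>. \<forall>w. (\<xi> \<bullet> w) * (R' z \<bullet> w) \<le> \<epsilon>/2 * norm (z - x) ^ k * (w \<bullet> w)"
    using R' \<open>\<epsilon> > 0\<close> by (intro upper_little_oD) auto
  then show "\<forall>\<^sub>F z in at x within \<Omega>. \<forall>w. (\<xi> \<bullet> w) * (R z \<bullet> w) \<le> \<epsilon> * norm (z - x) ^ k * (w \<bullet> w)"
  proof (rule eventually_mono, intro allI)
    fix z :: "real^'n" and w :: "real^'m"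
    assume R'_le: "\<forall>w. (\<xi> \<bullet> w) * (R' z \<bullet> w) \<le> \<epsilon>/2 * norm (z - x) ^ k * (w \<bullet> w)"
    have "norm \<xi> * norm (R z - R' z) * (w \<bullet> w) \<le> norm \<xi> * (\<eta> * norm (z - x) ^ k) * (w \<bullet> w)"
      by (intro mult_right_mono mult_left_mono close) auto
    also have "\<dots> = (norm \<xi> * \<eta>) * (norm (z - x) ^ k * (w \<bullet> w))"
      by (simp only: mult_ac)
    also have "\<dots> \<le> \<epsilon>/2 * (norm (z - x) ^ k * (w \<bullet> w))"
      using \<open>norm \<xi> * \<eta> \<le> \<epsilon> / 2\<close> by (intro mult_right_mono) auto
    finally show "(\<xi> \<bullet> w) * (R z \<bullet> w) \<le> \<epsilon> * norm (z - x) ^ k * (w \<bullet> w)"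
      using inner_mult_inner_le_perturb[of \<xi> w "R z" "R' z"] R'_le[rule_format, of w] by simp
  qed
qed

lemma convex_upper_little_o:
  assumes affine: "\<And>p q t z. F ((1 - t) *\<^sub>R p + t *\<^sub>R q) z = (1 - t) *\<^sub>R F p z + t *\<^sub>R F q z"
  shows "convex {p. upper_little_o \<Omega> x \<xi> k (F p)}"
  unfolding convex_alt mem_Collect_eq affine
  by (intro ballI allI impI upper_little_o_add upper_little_o_scaleR) auto

lemma closed_upper_little_o_Lipschitz:
  fixes F :: "'a::metric_space \<Rightarrow> real^'n \<Rightarrow> real^'m"
  assumes Lip: "\<And>p q z. norm (F p z - F q z) \<le> K * dist p q * norm (z - x) ^ k"
  shows "closed {p. upper_little_o \<Omega> x \<xi> k (F p)}"
  unfolding closure_subset_eq[symmetric]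
proof
  fix p assume "p \<in> closure {p. upper_little_o \<Omega> x \<xi> k (F p)}"
  then have near: "\<forall>e>0. \<exists>q\<in>{p. upper_little_o \<Omega> x \<xi> k (F p)}. dist q p < e"
    by (simp add: closure_approachable)
  have "upper_little_o \<Omega> x \<xi> k (F p)"
  proof (rule upper_little_o_approx)
    fix \<epsilon> :: real assume "\<epsilon> > 0"
    then have "0 < \<epsilon> / (\<bar>K\<bar> + 1)"
      by (intro divide_pos_pos) auto
    with near obtain q where q: "upper_little_o \<Omega> x \<xi> k (F q)" "dist q p < \<epsilon> / (\<bar>K\<bar> + 1)"
      by blast
    have "K * dist p q \<le> (\<bar>K\<bar> + 1) * dist p q"
      by (intro mult_right_mono) auto
    also have "\<dots> \<le> \<epsilon>"
      using q(2) by (simp add: dist_commute pos_less_divide_eq add_nonneg_pos mult.commute less_imp_le)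
    finally have "norm (F p z - F q z) \<le> \<epsilon> * norm (z - x) ^ k" for z
      using Lip[where p = p and q = q and z = z] by (meson mult_right_mono norm_ge_zero order_trans zero_le_power)
    with q show "\<exists>R'. upper_little_o \<Omega> x \<xi> k R' \<and> (\<forall>z. norm (F p z - R' z) \<le> \<epsilon> * norm (z - x) ^ k)"
      by blast
  qed
  then show "p \<in> {p. upper_little_o \<Omega> x \<xi> k (F p)}"
    by simp
qed

lemma upper_little_o_if_admissible_bound:
  fixes R :: "real^'n \<Rightarrow> real^'m"
  assumes "admissible_T T"
    and bound: "\<forall>\<^sub>F z in at x within \<Omega>. mat_le (vee \<xi> (R z)) (norm (z - x) ^ k *\<^sub>R T (z - x))"
  shows "upper_little_o \<Omega> x \<xi> k R"
  unfolding upper_little_o_def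
proof (intro allI impI)
  fix \<epsilon> :: real assume "\<epsilon> > 0"
  define C where "C = real CARD('m) * real CARD('m)"
  have "C > 0"
    by (simp add: C_def)
  have "((\<lambda>y. norm (T y)) \<longlongrightarrow> 0) (at 0)"
    using assms(1) by (simp add: admissible_T_def tendsto_norm_zero)
  moreover have "0 < \<epsilon> / C"
    using \<open>\<epsilon> > 0\<close> \<open>C > 0\<close> by simp
  ultimately have "\<forall>\<^sub>F y in at 0. norm (T y) < \<epsilon> / C"
    by (rule order_tendstoD(2))
  then have "\<forall>\<^sub>F z in at x within \<Omega>. C * norm (T (z - x)) \<le> \<epsilon>"
    unfolding eventually_at_within_shift[where x = x and \<Omega> = \<Omega>] using \<open>C > 0\<close>
    by (auto elim!: eventually_mono simp: pos_less_divide_eq mult.commute less_imp_le)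
  with bound show "\<forall>\<^sub>F z in at x within \<Omega>.
      \<forall>w. (\<xi> \<bullet> w) * (R z \<bullet> w) \<le> \<epsilon> * norm (z - x) ^ k * (w \<bullet> w)"
  proof (eventually_elim, intro allI)
    case (elim z)
    fix w
    have "(\<xi> \<bullet> w) * (R z \<bullet> w) \<le> norm (z - x) ^ k * (C * norm (T (z - x))) * (w \<bullet> w)"
      using vee_form_le_if_mat_le[OF elim(1)] unfolding C_def by simp
    also have "\<dots> \<le> norm (z - x) ^ k * \<epsilon> * (w \<bullet> w)"
      using elim(2) by (intro mult_right_mono mult_left_mono) simp_all
    finally show "(\<xi> \<bullet> w) * (R z \<bullet> w) \<le> \<epsilon> * norm (z - x) ^ k * (w \<bullet> w)"
      by (simp add: mult_ac)
  qed
qed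

lemma admissible_bound_if_upper_little_o:
  fixes R :: "real^'n \<Rightarrow> real^'m"
  assumes "upper_little_o \<Omega> x \<xi> k R"
  obtains T where "admissible_T T"
    "\<forall>\<^sub>F z in at x within \<Omega>. mat_le (vee \<xi> (R z)) (norm (z - x) ^ k *\<^sub>R T (z - x))"
proof -
  define Q where "Q e y \<longleftrightarrow> x + y \<in> \<Omega> \<longrightarrow>
      (\<forall>w. (\<xi> \<bullet> w) * (R (x + y) \<bullet> w) \<le> e * norm y ^ k * (w \<bullet> w))" for e y
  have "Q e' y" if "Q e y" "e \<le> e'" for e e' y
    using that unfolding Q_def by (blast intro: order_trans mult_right_mono zero_le_power norm_ge_zero inner_ge_zero)
  moreover have "\<forall>\<^sub>F y in at 0. Q e y" if "0 < e" for e
    using upper_little_oD[OF assms that]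
    unfolding eventually_at_within_shift[where x = x and \<Omega> = \<Omega>] Q_def by simp
  ultimately obtain h where h: "continuous_on UNIV h" "h 0 = 0" "\<forall>\<^sub>F y in at 0. Q (h y) y"
    by (rule continuous_modulus_exists) blast
  have "admissible_T (\<lambda>y. h y *\<^sub>R (mat 1 :: real^'m^'m))"
    using h(1,2) by (rule admissible_T_scaled_identity)
  moreover have "\<forall>\<^sub>F z in at x within \<Omega>.
      mat_le (vee \<xi> (R z)) (norm (z - x) ^ k *\<^sub>R (h (z - x) *\<^sub>R (mat 1 :: real^'m^'m)))"
    using h(3) unfolding eventually_at_within_shift[where x = x and \<Omega> = \<Omega>]
    by (simp add: Q_def mat_le_vee_scaled_identity_iff mult_ac)
  ultimately show ?thesis
    by (rule that)
qed

lemma ex_admissible_bound_iff_upper_little_o: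
  fixes R :: "real^'n \<Rightarrow> real^'m"
  shows "(\<exists>T. admissible_T T \<and>
      (\<forall>\<^sub>F z in at x within \<Omega>. mat_le (vee \<xi> (R z)) (norm (z - x) ^ k *\<^sub>R T (z - x))))
    \<longleftrightarrow> upper_little_o \<Omega> x \<xi> k R"
proof
  assume "\<exists>T. admissible_T T \<and>
      (\<forall>\<^sub>F z in at x within \<Omega>. mat_le (vee \<xi> (R z)) (norm (z - x) ^ k *\<^sub>R T (z - x)))"
  then show "upper_little_o \<Omega> x \<xi> k R"
    using upper_little_o_if_admissible_bound by blast
next
  assume "upper_little_o \<Omega> x \<xi> k R"
  then obtain T where "admissible_T T"
    "\<forall>\<^sub>F z in at x within \<Omega>. mat_le (vee \<xi> (R z)) (norm (z - x) ^ k *\<^sub>R T (z - x))"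
    by (rule admissible_bound_if_upper_little_o)
  then show "\<exists>T. admissible_T T \<and>
      (\<forall>\<^sub>F z in at x within \<Omega>. mat_le (vee \<xi> (R z)) (norm (z - x) ^ k *\<^sub>R T (z - x)))"
    by blast
qed

definition taylor_residual1 :: "(real^'n \<Rightarrow> real^'m) \<Rightarrow> real^'n \<Rightarrow> real^'n^'m \<Rightarrow> real^'n \<Rightarrow> real^'m"
  where "taylor_residual1 u x P z = u z - u x - P *v (z - x)"

definition taylor_residual2 ::
    "(real^'n \<Rightarrow> real^'m) \<Rightarrow> real^'n \<Rightarrow> (real^'n^'m) \<times> (real^'n^'n^'m) \<Rightarrow> real^'n \<Rightarrow> real^'m"
  where "taylor_residual2 u x PX z =
    u z - u x - fst PX *v (z - x) - (1/2) *\<^sub>R tensor_quad (snd PX) (z - x)"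

lemma J1_eq_upper_little_o: "J1 \<Omega> u \<xi> x = {P. upper_little_o \<Omega> x \<xi> 1 (taylor_residual1 u x P)}"
  by (simp add: J1_def taylor_residual1_def ex_admissible_bound_iff_upper_little_o[symmetric]
      eventually_at)

lemma mem_J2_iff:
  "(P, X) \<in> J2 \<Omega> u \<xi> x \<longleftrightarrow> sym_tensor X \<and> upper_little_o \<Omega> x \<xi> 2 (taylor_residual2 u x (P, X))"
  by (simp add: J2_def taylor_residual2_def ex_admissible_bound_iff_upper_little_o[symmetric]
      eventually_at)

lemma J2_eq_upper_little_o:
  fixes u :: "real^'n \<Rightarrow> real^'m"
  shows "J2 \<Omega> u \<xi> x = {PX. sym_tensor (snd PX)} \<inter> {PX. upper_little_o \<Omega> x \<xi> 2 (taylor_residual2 u x PX)}"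
proof (rule set_eqI)
  fix PX :: "(real^'n^'m) \<times> (real^'n^'n^'m)"
  show "PX \<in> J2 \<Omega> u \<xi> x \<longleftrightarrow>
      PX \<in> {PX. sym_tensor (snd PX)} \<inter> {PX. upper_little_o \<Omega> x \<xi> 2 (taylor_residual2 u x PX)}"
    by (cases PX) (simp add: mem_J2_iff)
qed

lemma taylor_residual1_affine:
  "taylor_residual1 u x ((1 - t) *\<^sub>R P + t *\<^sub>R Q) z
    = (1 - t) *\<^sub>R taylor_residual1 u x P z + t *\<^sub>R taylor_residual1 u x Q z"
  by (simp add: taylor_residual1_def algebra_simps scaleR_matrix_vector_assoc[symmetric])

lemma taylor_residual2_affine:
  "taylor_residual2 u x ((1 - t) *\<^sub>R PX + t *\<^sub>R QY) z
    = (1 - t) *\<^sub>R taylor_residual2 u x PX z + t *\<^sub>R taylor_residual2 u x QY z"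
  unfolding taylor_residual2_def fst_add snd_add fst_scaleR snd_scaleR tensor_quad_add tensor_quad_scaleR
  by (simp add: vec_eq_iff algebra_simps diff_divide_distrib scaleR_matrix_vector_assoc[symmetric])

lemma norm_taylor_residual1_diff_le:
  fixes P Q :: "real^'n^'m"
  shows "norm (taylor_residual1 u x P z - taylor_residual1 u x Q z)
    \<le> real CARD('m) * real CARD('n) * dist P Q * norm (z - x) ^ 1"
proof -
  have "taylor_residual1 u x P z - taylor_residual1 u x Q z = (Q - P) *v (z - x)"
    by (simp add: taylor_residual1_def algebra_simps)
  then show ?thesis
    using norm_matrix_vector_mult_le[of "Q - P" "z - x"] by (simp add: dist_norm norm_minus_commute)
qed

lemma norm_taylor_residual2_diff_le:
  fixes X Y :: "real^'n^'n^'m"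
  shows "norm (taylor_residual2 u x (P, X) z - taylor_residual2 u x (P, Y) z)
    \<le> real CARD('m) * real CARD('n) * real CARD('n) * dist X Y * norm (z - x) ^ 2"
proof -
  have "taylor_residual2 u x (P, X) z - taylor_residual2 u x (P, Y) z
      = (1/2) *\<^sub>R tensor_quad (Y - X) (z - x)"
    by (simp add: taylor_residual2_def tensor_quad_diff algebra_simps)
  then have "norm (taylor_residual2 u x (P, X) z - taylor_residual2 u x (P, Y) z)
      \<le> norm (tensor_quad (Y - X) (z - x))"
    by simp
  then show ?thesis
    using norm_tensor_quad_le[of "Y - X" "z - x"] by (simp add: dist_norm norm_minus_commute)
qed

lemma J2_add_vec_tensor_psd:
  assumes PX: "(P, X) \<in> J2 \<Omega> u \<xi> x" and "psd A"
  shows "(P, X + vec_tensor \<xi> A) \<in> J2 \<Omega> u \<xi> x"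
proof -
  have "A $ i $ j = A $ j $ i" for i j
  proof -
    have "transpose A $ j $ i = A $ i $ j"
      by (simp add: transpose_def)
    then show ?thesis
      using \<open>psd A\<close> by (simp add: psd_def)
  qed
  then have sym: "sym_tensor (X + vec_tensor \<xi> A)"
    using PX by (simp add: mem_J2_iff sym_tensor_def vec_tensor_def)
  define q where "q z = (z - x) \<bullet> (A *v (z - x))" for z
  have "taylor_residual2 u x (P, X + vec_tensor \<xi> A) = (\<lambda>z. taylor_residual2 u x (P, X) z - (q z / 2) *\<^sub>R \<xi>)"
    unfolding taylor_residual2_def snd_conv tensor_quad_add tensor_quad_vec_tensor q_def[symmetric]
    by (simp add: fun_eq_iff vec_eq_iff algebra_simps)
  moreover have "upper_little_o \<Omega> x \<xi> 2 (\<lambda>z. taylor_residual2 u x (P, X) z - (q z / 2) *\<^sub>R \<xi>)"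
    using PX \<open>psd A\<close> by (intro upper_little_o_diff_nonneg_scaleR) (simp_all add: mem_J2_iff psd_def q_def)
  ultimately show ?thesis
    using sym by (simp add: mem_J2_iff)
qed

lemma J2_unbounded:
  fixes u :: "real^'n \<Rightarrow> real^'m"
  assumes "\<xi> \<noteq> 0" and "J2 \<Omega> u \<xi> x \<noteq> {}"
  shows "\<not> bounded (J2 \<Omega> u \<xi> x)"
proof
  assume "bounded (J2 \<Omega> u \<xi> x)"
  then obtain B where B: "\<And>p. p \<in> J2 \<Omega> u \<xi> x \<Longrightarrow> norm p \<le> B"
    by (auto simp: bounded_iff)
  obtain P X where PX: "(P, X) \<in> J2 \<Omega> u \<xi> x"
    using assms(2) by auto
  define V where "V = vec_tensor \<xi> (mat 1 :: real^'n^'n)"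
  obtain a where "\<xi> $ a \<noteq> 0"
    using assms(1) by (auto simp: vec_eq_iff)
  then have "V $ a $ i $ i \<noteq> 0" for i
    by (simp add: V_def vec_tensor_def mat_def)
  then have "V \<noteq> 0"
    by (metis zero_index)
  then have "norm V > 0"
    by simp
  define t where "t = (B + norm X + 1) / norm V"
  have "0 \<le> B"
    using norm_ge_zero[of "(P, X)"] B[OF PX] by linarith
  then have "t \<ge> 0" and tV: "norm (t *\<^sub>R V) = B + norm X + 1"
    using \<open>norm V > 0\<close> by (simp_all add: t_def)
  have "psd (t *\<^sub>R (mat 1 :: real^'n^'n))"
    using \<open>t \<ge> 0\<close> by (simp add: psd_def transpose_scalar scaleR_matrix_vector_assoc[symmetric])
  moreover have "vec_tensor \<xi> (t *\<^sub>R (mat 1 :: real^'n^'n)) = t *\<^sub>R V"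
    by (simp add: V_def vec_eq_iff vec_tensor_def mat_def)
  ultimately have "(P, X + t *\<^sub>R V) \<in> J2 \<Omega> u \<xi> x"
    using J2_add_vec_tensor_psd[OF PX, of "t *\<^sub>R mat 1"] by simp
  then have "norm (P, X + t *\<^sub>R V) \<le> B"
    by (rule B)
  then have "norm (X + t *\<^sub>R V) \<le> B"
    using norm_snd_le[where x = P and y = "X + t *\<^sub>R V"] by linarith
  moreover have "norm (t *\<^sub>R V) \<le> norm (X + t *\<^sub>R V) + norm X"
    using norm_triangle_ineq4[of "X + t *\<^sub>R V" X] by simp
  ultimately show False
    using tV by linarith
qed

theorem proposition18:
  fixes \<Omega> :: "(real^'n) set" and u :: "real^'n \<Rightarrow> real^'m"
    and x :: "real^'n" and \<xi> :: "real^'m"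
  assumes "open \<Omega>" and "x \<in> \<Omega>" and "continuous (at x within \<Omega>) u"
    and "norm \<xi> = 1"
  shows "convex (J1 \<Omega> u \<xi> x) \<and> convex (J2 \<Omega> u \<xi> x)
     \<and> closed (J1 \<Omega> u \<xi> x) \<and> (\<forall>P. closed {X. (P, X) \<in> J2 \<Omega> u \<xi> x})
     \<and> (J2 \<Omega> u \<xi> x \<noteq> {} \<longrightarrow> \<not> bounded (J2 \<Omega> u \<xi> x))
     \<and> (\<forall>P X A. (P, X) \<in> J2 \<Omega> u \<xi> x \<and> psd A \<longrightarrow>
          (P, X + vec_tensor \<xi> A) \<in> J2 \<Omega> u \<xi> x)"
proof -
  have "\<xi> \<noteq> 0"
    using \<open>norm \<xi> = 1\<close> by auto
  have "convex (J1 \<Omega> u \<xi> x)"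
    unfolding J1_eq_upper_little_o by (rule convex_upper_little_o) (rule taylor_residual1_affine)
  moreover have "convex (J2 \<Omega> u \<xi> x)"
    unfolding J2_eq_upper_little_o
    by (intro convex_Int convex_sym_tensor_snd convex_upper_little_o taylor_residual2_affine)
  moreover have "closed (J1 \<Omega> u \<xi> x)"
    unfolding J1_eq_upper_little_o
    by (rule closed_upper_little_o_Lipschitz) (rule norm_taylor_residual1_diff_le)
  moreover have "closed {X. (P, X) \<in> J2 \<Omega> u \<xi> x}" for P
  proof -
    have "{X. (P, X) \<in> J2 \<Omega> u \<xi> x}
        = {X. sym_tensor X} \<inter> {X. upper_little_o \<Omega> x \<xi> 2 (taylor_residual2 u x (P, X))}"
      by (auto simp: mem_J2_iff)
    moreover have "closed {X. upper_little_o \<Omega> x \<xi> 2 (taylor_residual2 u x (P, X))}"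
      by (rule closed_upper_little_o_Lipschitz) (rule norm_taylor_residual2_diff_le)
    ultimately show ?thesis
      by (simp add: closed_Int closed_sym_tensor)
  qed
  ultimately show ?thesis
    using J2_unbounded[OF \<open>\<xi> \<noteq> 0\<close>] J2_add_vec_tensor_psd by blast
qed

end
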